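(* Let $C$ be a non-empty strictly convex cone in a topological real vector space $V$ and $f:C\to\mathbb{R}$ a non-negative positively homogeneous function ($f(\lambda x)=\lambda f(x)$ for $x\in C$, $\lambda>0$). Then for any real number $\alpha>1$ the following are equivalent: (1) $f$ is continuous and $f^{\alpha}$ is strictly convex. (2) $f$ is continuous and strictly quasi-convex. (3) $f$ is strictly sub-convex and $f^{-1}(0)\subseteq\{0\}$.
   Context: Topological real vector spaces are not assumed Hausdorff; $C$ carries the subspace topology. A cone is a subset $C$ with $\lambda C\subseteq C$ for all real $\lambda>0$ (it may or may not contain $0$). A function $g$ on a convex set $C$ is strictly convex if $g((1-t)x+ty)<(1-t)g(x)+tg(y)$ for all distinct $x,y\in C$, $t\in(0,1)$; strictly quasi-convex if $g((1-t)x+ty)<\max\{g(x),g(y)\}$ for such $x,y,t$. For $f:C\to\mathbb{R}$, $S_r(f)=\{x\in C: f(x)\le r\}$. For a subset $S$, $\mathrm{Aff}(S)$ is its affine hull; $\mathrm{ri}(S)$, $\mathrm{rc}(S)$ are the interior and closure of $S$ in the subspace topology of $\mathrm{Aff}(S)$. $]x,y[=\{(1-t)x+ty: t\in[0,1]\}\setminus\{x,y\}$. A subset $C$ is strictly convex if for any two distinct $x,y\in\mathrm{rc}(C)$, $]x,y[\subseteq\mathrm{ri}(C)$. $f$ is strictly sub-convex if $S_r(f)$ is strictly convex for every $r\in\mathbb{R}$. *)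

theory Defs
  imports "HOL-Analysis.Analysis"
begin

text \<open>A topological real vector space (not necessarily Hausdorff): addition and
scalar multiplication are jointly continuous (product topologies).\<close>
definition tvs_ops_continuous :: "('a::{real_vector,topological_space}) itself \<Rightarrow> bool" where
  "tvs_ops_continuous _ \<longleftrightarrow>
     continuous_on UNIV (\<lambda>p::'a \<times> 'a. fst p + snd p) \<and>
     continuous_on UNIV (\<lambda>p::real \<times> 'a. scaleR (fst p) (snd p))"

definition is_cone :: "'a::real_vector set \<Rightarrow> bool" where
  "is_cone C \<longleftrightarrow> (\<forall>x\<in>C. \<forall>c::real. c > 0 \<longrightarrow> c *\<^sub>R x \<in> C)"

definition ri :: "'a::{real_vector,topological_space} set \<Rightarrow> 'a set" where
  "ri S = (subtopology euclidean (affine hull S)) interior_of S"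

definition rc :: "'a::{real_vector,topological_space} set \<Rightarrow> 'a set" where
  "rc S = (subtopology euclidean (affine hull S)) closure_of S"

definition strictly_convex_set :: "'a::{real_vector,topological_space} set \<Rightarrow> bool" where
  "strictly_convex_set C \<longleftrightarrow>
     (\<forall>x\<in>rc C. \<forall>y\<in>rc C. x \<noteq> y \<longrightarrow> open_segment x y \<subseteq> ri C)"

definition strictly_convex_fun_on :: "'a::real_vector set \<Rightarrow> ('a \<Rightarrow> real) \<Rightarrow> bool" where
  "strictly_convex_fun_on C g \<longleftrightarrow> convex C \<and>
     (\<forall>x\<in>C. \<forall>y\<in>C. \<forall>t::real. x \<noteq> y \<longrightarrow> 0 < t \<longrightarrow> t < 1 \<longrightarrow>
        g ((1 - t) *\<^sub>R x + t *\<^sub>R y) < (1 - t) * g x + t * g y)"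

definition strictly_quasi_convex_on :: "'a::real_vector set \<Rightarrow> ('a \<Rightarrow> real) \<Rightarrow> bool" where
  "strictly_quasi_convex_on C g \<longleftrightarrow> convex C \<and>
     (\<forall>x\<in>C. \<forall>y\<in>C. \<forall>t::real. x \<noteq> y \<longrightarrow> 0 < t \<longrightarrow> t < 1 \<longrightarrow>
        g ((1 - t) *\<^sub>R x + t *\<^sub>R y) < max (g x) (g y))"

definition sublevel :: "'a set \<Rightarrow> ('a \<Rightarrow> real) \<Rightarrow> real \<Rightarrow> 'a set" where
  "sublevel C f r = {x\<in>C. f x \<le> r}"

definition strictly_sub_convex_on :: "'a::{real_vector,topological_space} set \<Rightarrow> ('a \<Rightarrow> real) \<Rightarrow> bool" where
  "strictly_sub_convex_on C f \<longleftrightarrow> (\<forall>r::real. strictly_convex_set (sublevel C f r))"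

end

theory Submission
  imports Defs
begin

text \<open>For a nonnegative positively homogeneous \<open>f\<close>, strict quasi-convexity already gives
  convexity (normalise two points to the level \<open>f = 1\<close>), and then \<open>f\<^sup>\<alpha>\<close> is strictly convex
  because \<open>t \<mapsto> t\<^sup>\<alpha>\<close> is strictly convex and increasing; conversely strict convexity of
  \<open>f\<^sup>\<alpha>\<close> trivially gives strict quasi-convexity.

  If \<open>f\<close> is continuous and strictly quasi-convex, its sublevel sets are convex, \<open>f \<le> r\<close> persists
  on segments between points of the relative closure of \<open>S\<^sub>r\<close>, and strict quasi-convexity together
  with continuity moves the open segments into the relative interior of \<open>S\<^sub>r\<close>.

  Conversely, on the relative interior of \<open>S\<^sub>r\<close> homogeneity forces \<open>f < r\<close>, which is strict
  quasi-convexity. Continuity follows from two neighbourhood estimates: a point \<open>w\<close> lies outside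
  the relative closure of \<open>S\<^sub>r\<close> for \<open>r < f w\<close>, and inside its relative interior for
  \<open>r > f w\<close>. At the apex of a pointed cone the latter fails; there one uses that in a pointed
  strictly convex cone \<open>v - u \<in> C\<close> forces \<open>u\<close> onto the segment from \<open>0\<close> to \<open>v\<close>.\<close>

section \<open>Relative interior and relative closure in a topological vector space\<close>

lemma in_ri_iff:
  "x \<in> ri S \<longleftrightarrow> x \<in> S \<and> (\<exists>U. open U \<and> x \<in> U \<and> U \<inter> affine hull S \<subseteq> S)"
proof
  assume "x \<in> ri S"
  then obtain T where T: "openin (subtopology euclidean (affine hull S)) T" "x \<in> T" "T \<subseteq> S"
    unfolding ri_def interior_of_def by auto
  then obtain U where "open U" "T = U \<inter> affine hull S"
    by (auto simp: openin_subtopology)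
  with T show "x \<in> S \<and> (\<exists>U. open U \<and> x \<in> U \<and> U \<inter> affine hull S \<subseteq> S)"
    by auto
next
  assume "x \<in> S \<and> (\<exists>U. open U \<and> x \<in> U \<and> U \<inter> affine hull S \<subseteq> S)"
  then obtain U where U: "x \<in> S" "open U" "x \<in> U" "U \<inter> affine hull S \<subseteq> S"
    by auto
  then have "openin (subtopology euclidean (affine hull S)) (U \<inter> affine hull S)"
    "x \<in> U \<inter> affine hull S"
    by (auto simp: openin_subtopology intro: hull_inc)
  with U show "x \<in> ri S"
    unfolding ri_def interior_of_def by blast
qed

lemma in_rc_iff:
  "x \<in> rc S \<longleftrightarrow> x \<in> affine hull S \<and> (\<forall>U. open U \<longrightarrow> x \<in> U \<longrightarrow> (\<exists>y\<in>S. y \<in> U))"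
proof
  assume x: "x \<in> rc S"
  then have hull: "x \<in> affine hull S"
    unfolding rc_def closure_of_def by auto
  have "\<exists>y\<in>S. y \<in> U" if "open U" "x \<in> U" for U
  proof -
    have "openin (subtopology euclidean (affine hull S)) (U \<inter> affine hull S)"
      using that by (auto simp: openin_subtopology)
    with x hull that show ?thesis
      unfolding rc_def closure_of_def by blast
  qed
  with hull show "x \<in> affine hull S \<and> (\<forall>U. open U \<longrightarrow> x \<in> U \<longrightarrow> (\<exists>y\<in>S. y \<in> U))"
    by blast
next
  assume x: "x \<in> affine hull S \<and> (\<forall>U. open U \<longrightarrow> x \<in> U \<longrightarrow> (\<exists>y\<in>S. y \<in> U))"
  show "x \<in> rc S"
    unfolding rc_def closure_of_def
  proof safe
    fix T
    assume T: "x \<in> T" "openin (subtopology euclidean (affine hull S)) T"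
    then obtain U where "open U" "T = U \<inter> affine hull S"
      by (auto simp: openin_subtopology)
    with x T show "\<exists>y\<in>S. y \<in> T"
      by (auto intro: hull_inc)
  qed (use x in simp)
qed

lemma ri_subset: "ri S \<subseteq> S"
  by (auto simp: in_ri_iff)

lemma subset_rc: "S \<subseteq> rc S"
  by (auto simp: in_rc_iff intro: hull_inc)

lemma rc_mono:
  assumes "S \<subseteq> T"
  shows "rc S \<subseteq> rc T"
proof
  fix x
  assume "x \<in> rc S"
  then have "x \<in> affine hull S" "\<forall>U. open U \<longrightarrow> x \<in> U \<longrightarrow> (\<exists>y\<in>S. y \<in> U)"
    by (simp_all add: in_rc_iff)
  with assms hull_mono[OF assms] show "x \<in> rc T"
    unfolding in_rc_iff by (meson subsetD)
qed

lemma strictly_convex_setD: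
  assumes "strictly_convex_set S" "x \<in> rc S" "y \<in> rc S" "z \<in> open_segment x y"
  shows "z \<in> ri S"
proof -
  from assms(4) have "x \<noteq> y"
    by auto
  with assms show ?thesis
    unfolding strictly_convex_set_def by blast
qed

lemma strictly_convex_set_imp_convex:
  assumes "strictly_convex_set S"
  shows "convex S"
  unfolding convex_alt
proof (intro ballI allI impI, elim conjE)
  fix x y and u :: real
  assume xy: "x \<in> S" "y \<in> S" and u: "0 \<le> u" "u \<le> 1"
  show "(1 - u) *\<^sub>R x + u *\<^sub>R y \<in> S"
  proof (cases "x = y \<or> u = 0 \<or> u = 1")
    case True
    with xy show ?thesis
      by (auto simp flip: scaleR_left_distrib)
  next
    case False
    with u have "(1 - u) *\<^sub>R x + u *\<^sub>R y \<in> open_segment x y"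
      by (auto simp: in_segment intro!: exI[of _ u])
    with assms xy show ?thesis
      using strictly_convex_setD subset_rc ri_subset by blast
  qed
qed

lemma tvs_continuous_on_add:
  fixes g h :: "'b::topological_space \<Rightarrow> 'a::{real_vector,topological_space}"
  assumes "tvs_ops_continuous TYPE('a)" "continuous_on S g" "continuous_on S h"
  shows "continuous_on S (\<lambda>z. g z + h z)"
proof -
  have "continuous_on UNIV (\<lambda>p::'a \<times> 'a. fst p + snd p)"
    using assms(1) unfolding tvs_ops_continuous_def by blast
  from continuous_on_compose2[OF this continuous_on_Pair[OF assms(2,3)]]
  show ?thesis
    by simp
qed

lemma tvs_continuous_on_scaleR:
  fixes c :: "'b::topological_space \<Rightarrow> real" and g :: "'b \<Rightarrow> 'a::{real_vector,topological_space}"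
  assumes "tvs_ops_continuous TYPE('a)" "continuous_on S c" "continuous_on S g"
  shows "continuous_on S (\<lambda>z. c z *\<^sub>R g z)"
proof -
  have "continuous_on UNIV (\<lambda>p::real \<times> 'a. fst p *\<^sub>R snd p)"
    using assms(1) unfolding tvs_ops_continuous_def by blast
  from continuous_on_compose2[OF this continuous_on_Pair[OF assms(2,3)]]
  show ?thesis
    by simp
qed

lemma tvs_affine_nbhd:
  fixes x d :: "'a::{real_vector,topological_space}"
  assumes "tvs_ops_continuous TYPE('a)" "open U" "c *\<^sub>R x + d \<in> U"
  shows "\<exists>V. open V \<and> x \<in> V \<and> (\<forall>y\<in>V. c *\<^sub>R y + d \<in> U)"
proof -
  have "continuous_on UNIV (\<lambda>y::'a. c *\<^sub>R y + d)"
    by (intro tvs_continuous_on_add[OF assms(1)] tvs_continuous_on_scaleR[OF assms(1)] continuous_intros)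
  then have "open ((\<lambda>y. c *\<^sub>R y + d) -` U)"
    using open_vimage[OF assms(2)] by blast
  with assms(3) show ?thesis
    by blast
qed

lemma continuous_real_nbhd_0:
  fixes g :: "real \<Rightarrow> 'a::topological_space"
  assumes "continuous_on UNIV g" "open U" "g 0 \<in> U"
  shows "\<exists>e>0. \<forall>s. \<bar>s\<bar> < e \<longrightarrow> g s \<in> U"
proof -
  have "open (g -` U)"
    using open_vimage[OF assms(2,1)] .
  with assms(3) obtain e where "e > 0" "\<forall>s. dist s 0 < e \<longrightarrow> s \<in> g -` U"
    unfolding open_dist by blast
  then show ?thesis
    by auto
qed

lemma ri_line_extends:
  fixes x y :: "'a::{real_vector,topological_space}"
  assumes "tvs_ops_continuous TYPE('a)" "x \<in> ri S" "y \<in> affine hull S"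
  shows "\<exists>e>0. \<forall>s. \<bar>s\<bar> < e \<longrightarrow> (1 - s) *\<^sub>R x + s *\<^sub>R y \<in> S"
proof -
  obtain U where U: "open U" "x \<in> U" "U \<inter> affine hull S \<subseteq> S"
    using assms(2) by (auto simp: in_ri_iff)
  have "continuous_on UNIV (\<lambda>s::real. (1 - s) *\<^sub>R x + s *\<^sub>R y)"
    by (intro tvs_continuous_on_add[OF assms(1)] tvs_continuous_on_scaleR[OF assms(1)] continuous_intros)
  from continuous_real_nbhd_0[OF this U(1)] U(2)
  obtain e where "e > 0" "\<forall>s. \<bar>s\<bar> < e \<longrightarrow> (1 - s) *\<^sub>R x + s *\<^sub>R y \<in> U"
    by auto
  moreover have "(1 - s) *\<^sub>R x + s *\<^sub>R y \<in> affine hull S" for s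
    using assms(2,3) ri_subset
    by (intro mem_affine[OF affine_affine_hull]) (auto intro: hull_inc)
  ultimately show ?thesis
    using U(3) by blast
qed

lemma in_rc_if_line_approx:
  fixes x d :: "'a::{real_vector,topological_space}"
  assumes "tvs_ops_continuous TYPE('a)" "x \<in> affine hull S"
    and approx: "\<And>e. e > 0 \<Longrightarrow> \<exists>s. \<bar>s\<bar> < e \<and> x + s *\<^sub>R d \<in> S"
  shows "x \<in> rc S"
  unfolding in_rc_iff
proof (intro conjI allI impI assms(2))
  fix U
  assume U: "open U" "x \<in> U"
  have "continuous_on UNIV (\<lambda>s::real. x + s *\<^sub>R d)"
    by (intro tvs_continuous_on_add[OF assms(1)] tvs_continuous_on_scaleR[OF assms(1)] continuous_intros)
  from continuous_real_nbhd_0[OF this U(1)] U(2)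
  obtain e where "e > 0" "\<forall>s. \<bar>s\<bar> < e \<longrightarrow> x + s *\<^sub>R d \<in> U"
    by auto
  with approx show "\<exists>y\<in>S. y \<in> U"
    by blast
qed

lemma in_open_segment_scaleR:
  fixes x :: "'a::real_vector"
  assumes "x \<noteq> 0" "0 < a" "a < 1" "1 < b"
  shows "x \<in> open_segment (a *\<^sub>R x) (b *\<^sub>R x)"
proof -
  define t where "t = (1 - a) / (b - a)"
  have t: "0 < t" "t < 1"
    using assms by (auto simp: t_def field_simps)
  have "t * (b - a) = 1 - a"
    using assms by (simp add: t_def)
  then have "(1 - t) * a + t * b = 1"
    by (simp add: algebra_simps)
  then have "(1 - t) *\<^sub>R (a *\<^sub>R x) + t *\<^sub>R (b *\<^sub>R x) = x"
    by (simp flip: scaleR_left_distrib)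
  with t assms show ?thesis
    unfolding in_segment by (intro conjI exI[of _ t]) auto
qed

lemma zero_in_open_segment_uminus:
  fixes x :: "'a::real_vector"
  assumes "x \<noteq> 0"
  shows "0 \<in> open_segment x (- x)"
proof -
  have "x \<noteq> - x"
    using assms by (metis eq_neg_iff_add_eq_0 scaleR_2 scaleR_eq_0_iff zero_neq_numeral)
  then show ?thesis
    unfolding in_segment by (intro conjI exI[of _ "1/2"]) (auto simp: algebra_simps)
qed

lemma open_segment_point_is_midpoint:
  fixes x y w :: "'a::real_vector"
  assumes "w \<in> open_segment x y"
  shows "\<exists>w1\<in>open_segment x y. \<exists>w2\<in>open_segment x y. w1 \<noteq> w2 \<and> w = midpoint w1 w2"
proof -
  obtain t where t: "x \<noteq> y" "0 < t" "t < 1" "w = (1 - t) *\<^sub>R x + t *\<^sub>R y"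
    using assms by (auto simp: in_segment)
  define d where "d = min t (1 - t) / 2"
  have d: "0 < d" "0 < t - d" "t + d < 1"
    using t by (auto simp: d_def min_def field_simps)
  define w1 where "w1 = (1 - (t - d)) *\<^sub>R x + (t - d) *\<^sub>R y"
  define w2 where "w2 = (1 - (t + d)) *\<^sub>R x + (t + d) *\<^sub>R y"
  have "w1 \<in> open_segment x y"
    using t d unfolding in_segment w1_def by (intro conjI exI[of _ "t - d"]) auto
  moreover have "w2 \<in> open_segment x y"
    using t d unfolding in_segment w2_def by (intro conjI exI[of _ "t + d"]) auto
  moreover have "w2 - w1 = (2 * d) *\<^sub>R (y - x)"
    unfolding w1_def w2_def by (simp add: algebra_simps flip: scaleR_2)
  then have "w1 \<noteq> w2"
    using t d by auto
  moreover have "w1 + w2 = w + w"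
    unfolding t(4) w1_def w2_def by (simp add: algebra_simps)
  then have "w = midpoint w1 w2"
    by (metis midpoint_eq_iff)
  ultimately show ?thesis
    by blast
qed

section \<open>Strict convexity of real powers\<close>

lemma one_plus_mult_less_powr:
  fixes x a :: real
  assumes "0 \<le> x" "x \<noteq> 1" "1 < a"
  shows "1 + a * (x - 1) < x powr a"
proof -
  define g where "g y = y powr a - a * y" for y :: real
  have deriv: "(g has_real_derivative a * y powr (a - 1) - a) (at y)" if "0 < y" for y
    unfolding g_def using that by (auto intro!: derivative_eq_intros)
  consider "x = 0" | "0 < x" "x < 1" | "1 < x"
    using assms by linarith
  then show ?thesis
  proof cases
    case 1
    with assms show ?thesis
      by simp
  next
    case 2
    then obtain z where z: "x < z" "z < 1" "g 1 - g x = (1 - x) * (a * z powr (a - 1) - a)"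
      using MVT2[of x 1 g "\<lambda>y. a * y powr (a - 1) - a"] deriv by force
    have "z powr (a - 1) < 1"
      using z 2 assms powr_less_mono2[of "a - 1" z 1] by simp
    with 2 assms have "(1 - x) * (a * z powr (a - 1) - a) < 0"
      by (intro mult_pos_neg) auto
    with z show ?thesis
      by (simp add: g_def algebra_simps)
  next
    case 3
    then obtain z where z: "1 < z" "z < x" "g x - g 1 = (x - 1) * (a * z powr (a - 1) - a)"
      using MVT2[of 1 x g "\<lambda>y. a * y powr (a - 1) - a"] deriv by force
    have "1 < z powr (a - 1)"
      using z assms by (intro gr_one_powr) auto
    with 3 assms have "0 < (x - 1) * (a * z powr (a - 1) - a)"
      by (intro mult_pos_pos) auto
    with z show ?thesis
      by (simp add: g_def algebra_simps)
  qed
qed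

text \<open>Each of \<open>u\<^sup>a\<close>, \<open>v\<^sup>a\<close> lies above the tangent line of \<open>x\<^sup>a\<close> at the convex combination
  \<open>m\<close>, strictly so for the one that differs from \<open>m\<close>.\<close>

lemma powr_strictly_convex:
  fixes u v t a :: real
  assumes "0 \<le> u" "0 \<le> v" "u \<noteq> v" "0 < t" "t < 1" "1 < a"
  shows "((1 - t) * u + t * v) powr a < (1 - t) * u powr a + t * v powr a"
proof -
  define m where "m = (1 - t) * u + t * v"
  define tangent where "tangent w = m powr a + a * m powr a * (w / m - 1)" for w
  have "0 < m"
    using assms by (cases "u = 0") (auto simp: m_def add_pos_nonneg)
  have below: "tangent w < w powr a" if "0 \<le> w" "w \<noteq> m" for w
  proof -
    have "1 + a * (w / m - 1) < (w / m) powr a"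
      using that \<open>0 < m\<close> assms by (intro one_plus_mult_less_powr) auto
    then have "m powr a * (1 + a * (w / m - 1)) < m powr a * (w / m) powr a"
      using \<open>0 < m\<close> by simp
    with that \<open>0 < m\<close> show ?thesis
      by (simp add: tangent_def powr_divide algebra_simps)
  qed
  have below_le: "tangent w \<le> w powr a" if "0 \<le> w" for w
    using below[OF that] \<open>0 < m\<close> by (cases "w = m") (auto simp: tangent_def)
  have "(1 - t) * tangent u \<le> (1 - t) * u powr a" "t * tangent v \<le> t * v powr a"
    using below_le assms by (simp_all add: mult_left_mono)
  moreover have "(1 - t) * tangent u < (1 - t) * u powr a \<or> t * tangent v < t * v powr a"
  proof -
    have "u \<noteq> m \<or> v \<noteq> m"
      using assms by (auto simp: m_def algebra_simps)
    with below assms show ?thesis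
      by auto
  qed
  ultimately have "(1 - t) * tangent u + t * tangent v < (1 - t) * u powr a + t * v powr a"
    by linarith
  moreover have "(1 - t) * tangent u + t * tangent v = m powr a"
  proof -
    have "(1 - t) * tangent u + t * tangent v
        = m powr a + a * m powr a * (((1 - t) * u + t * v) / m - 1)"
      by (simp add: tangent_def algebra_simps add_divide_distrib diff_divide_distrib)
    with \<open>0 < m\<close> show ?thesis
      by (simp flip: m_def)
  qed
  ultimately show ?thesis
    by (simp add: m_def)
qed

section \<open>Quasi-convexity and sublevel sets\<close>

lemma strictly_quasi_convex_onD:
  assumes "strictly_quasi_convex_on C g" "x \<in> C" "y \<in> C" "x \<noteq> y" "0 < t" "t < 1"
  shows "g ((1 - t) *\<^sub>R x + t *\<^sub>R y) < max (g x) (g y)"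
  using assms unfolding strictly_quasi_convex_on_def by blast

lemma strictly_quasi_convex_imp_convex_sublevel:
  assumes "strictly_quasi_convex_on C g"
  shows "convex (sublevel C g r)"
  unfolding convex_alt
proof (intro ballI allI impI, elim conjE)
  fix x y and t :: real
  assume xy: "x \<in> sublevel C g r" "y \<in> sublevel C g r" and t: "0 \<le> t" "t \<le> 1"
  have "convex C"
    using assms unfolding strictly_quasi_convex_on_def by blast
  with xy t have "(1 - t) *\<^sub>R x + t *\<^sub>R y \<in> C"
    by (auto simp: sublevel_def convex_alt)
  moreover have "g ((1 - t) *\<^sub>R x + t *\<^sub>R y) \<le> r"
  proof (cases "x = y \<or> t = 0 \<or> t = 1")
    case True
    with xy show ?thesis
      by (auto simp: sublevel_def simp flip: scaleR_left_distrib)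
  next
    case False
    with assms xy t have "g ((1 - t) *\<^sub>R x + t *\<^sub>R y) < max (g x) (g y)"
      by (intro strictly_quasi_convex_onD) (auto simp: sublevel_def)
    moreover have "max (g x) (g y) \<le> r"
      using xy by (simp add: sublevel_def)
    ultimately show ?thesis
      by linarith
  qed
  ultimately show "(1 - t) *\<^sub>R x + t *\<^sub>R y \<in> sublevel C g r"
    by (simp add: sublevel_def)
qed

lemma strictly_convex_powr_imp_strictly_quasi_convex:
  assumes "strictly_convex_fun_on C (\<lambda>x. g x powr a)" "0 < a" "\<forall>x\<in>C. 0 \<le> g x"
  shows "strictly_quasi_convex_on C g"
  unfolding strictly_quasi_convex_on_def
proof (intro conjI ballI allI impI)
  show "convex C"
    using assms(1) unfolding strictly_convex_fun_on_def by blast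
next
  fix x y and t :: real
  assume xy: "x \<in> C" "y \<in> C" "x \<noteq> y" and t: "0 < t" "t < 1"
  define M where "M = max (g x) (g y)"
  have "g x powr a \<le> M powr a" "g y powr a \<le> M powr a"
    using assms(2,3) xy by (auto simp: M_def intro!: powr_mono2)
  with t have "(1 - t) * g x powr a + t * g y powr a \<le> M powr a"
    using convex_bound_le[of "g x powr a" "M powr a" "g y powr a" "1 - t" t] by simp
  moreover have "g ((1 - t) *\<^sub>R x + t *\<^sub>R y) powr a < (1 - t) * g x powr a + t * g y powr a"
    using assms(1) xy t unfolding strictly_convex_fun_on_def by blast
  ultimately have "g ((1 - t) *\<^sub>R x + t *\<^sub>R y) powr a < M powr a"
    by linarith
  moreover have "0 \<le> M"
    using assms(3) xy by (auto simp: M_def max_def)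
  ultimately show "g ((1 - t) *\<^sub>R x + t *\<^sub>R y) < max (g x) (g y)"
    using assms(2) unfolding M_def by (meson not_less powr_mono2 less_imp_le)
qed

lemma sublevel_le_on_rc:
  fixes f :: "'a::{real_vector,topological_space} \<Rightarrow> real"
  assumes tvs: "tvs_ops_continuous TYPE('a)"
    and cont: "continuous_on C f" and conv: "convex (sublevel C f r)"
    and x: "x \<in> rc (sublevel C f r)" and y: "y \<in> rc (sublevel C f r)"
    and z: "z \<in> open_segment x y" "z \<in> C"
  shows "f z \<le> r"
proof (rule ccontr)
  assume "\<not> f z \<le> r"
  then obtain A where A: "open A" "z \<in> A" "\<forall>u\<in>C. u \<in> A \<longrightarrow> r < f u"
    using cont z(2) unfolding continuous_on_topological
    by (metis greaterThan_iff not_le open_greaterThan)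
  obtain t where t: "0 < t" "t < 1" "z = (1 - t) *\<^sub>R x + t *\<^sub>R y"
    using z(1) by (auto simp: in_segment)
  have "t *\<^sub>R y + (1 - t) *\<^sub>R x \<in> A"
    using A(2) t(3) by (simp add: add.commute)
  then obtain V where V: "open V" "y \<in> V" "\<forall>q\<in>V. t *\<^sub>R q + (1 - t) *\<^sub>R x \<in> A"
    using tvs_affine_nbhd[OF tvs A(1)] by blast
  then obtain y' where y': "y' \<in> sublevel C f r" "(1 - t) *\<^sub>R x + t *\<^sub>R y' \<in> A"
    using y unfolding in_rc_iff by (metis add.commute)
  then obtain V' where V': "open V'" "x \<in> V'" "\<forall>q\<in>V'. (1 - t) *\<^sub>R q + t *\<^sub>R y' \<in> A"
    using tvs_affine_nbhd[OF tvs A(1)] by blast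
  then obtain x' where x': "x' \<in> sublevel C f r" "(1 - t) *\<^sub>R x' + t *\<^sub>R y' \<in> A"
    using x unfolding in_rc_iff by metis
  have "(1 - t) *\<^sub>R x' + t *\<^sub>R y' \<in> sublevel C f r"
    using conv x'(1) y'(1) t by (intro convexD) auto
  with x'(2) A(3) show False
    by (auto simp: sublevel_def)
qed

lemma ri_sublevel_if_less:
  assumes "continuous_on C f" "w \<in> ri C" "f w < r"
  shows "w \<in> ri (sublevel C f r)"
proof -
  obtain U1 where U1: "open U1" "w \<in> U1" "U1 \<inter> affine hull C \<subseteq> C"
    using assms(2) by (auto simp: in_ri_iff)
  have "w \<in> C"
    using assms(2) ri_subset by blast
  then obtain U2 where U2: "open U2" "w \<in> U2" "\<forall>u\<in>C. u \<in> U2 \<longrightarrow> f u < r"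
    using assms(1,3) unfolding continuous_on_topological
    by (metis lessThan_iff open_lessThan)
  have "affine hull (sublevel C f r) \<subseteq> affine hull C"
    by (rule hull_mono) (auto simp: sublevel_def)
  with U1 U2 have "(U1 \<inter> U2) \<inter> affine hull (sublevel C f r) \<subseteq> sublevel C f r"
    by (fastforce simp: sublevel_def)
  with U1 U2 \<open>w \<in> C\<close> assms(3) show ?thesis
    unfolding in_ri_iff sublevel_def by (intro conjI exI[of _ "U1 \<inter> U2"]) auto
qed

section \<open>Strictly convex cones\<close>

locale strictly_convex_cone =
  fixes C :: "'a::{real_vector,topological_space} set"
  assumes tvs: "tvs_ops_continuous TYPE('a)"
    and cone: "is_cone C"
    and strictly_convex: "strictly_convex_set C"
begin

lemma convex: "convex C"
  using strictly_convex by (rule strictly_convex_set_imp_convex)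

lemma scaleR_mem: "x \<in> C \<Longrightarrow> 0 < c \<Longrightarrow> c *\<^sub>R x \<in> C"
  using cone unfolding is_cone_def by blast

lemma affine_hull_eq_span: "0 \<in> C \<Longrightarrow> affine hull C = span C"
  by (rule affine_hull_span_0) (rule hull_inc)

lemma nonzero_mem_ri:
  assumes "x \<in> C" "x \<noteq> 0"
  shows "x \<in> ri C"
proof -
  have "x \<in> open_segment ((1/2) *\<^sub>R x) (2 *\<^sub>R x)"
    using assms(2) by (rule in_open_segment_scaleR) auto
  moreover have "(1/2) *\<^sub>R x \<in> C" "2 *\<^sub>R x \<in> C"
    using assms(1) by (simp_all add: scaleR_mem)
  then have "(1/2) *\<^sub>R x \<in> rc C" "2 *\<^sub>R x \<in> rc C"
    using subset_rc by blast+
  ultimately show ?thesis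
    using strictly_convex strictly_convex_setD by blast
qed

lemma uminus_mem_if_zero_in_ri:
  assumes "0 \<in> ri C" "u \<in> C"
  shows "- u \<in> C"
proof -
  obtain e where e: "0 < e" "\<forall>s. \<bar>s\<bar> < e \<longrightarrow> (1 - s) *\<^sub>R 0 + s *\<^sub>R u \<in> C"
    using ri_line_extends[OF tvs assms(1)] assms(2) hull_inc by metis
  then have "- ((e / 2) *\<^sub>R u) \<in> C"
    using spec[OF e(2), of "- e / 2"] by simp
  then have "(2 / e) *\<^sub>R - ((e / 2) *\<^sub>R u) \<in> C"
    using e(1) by (intro scaleR_mem) auto
  with e(1) show ?thesis
    by simp
qed

lemma uminus_in_rc_if_ray_unbounded:
  assumes "0 \<in> C" "u \<in> C" and ray: "\<And>s. 0 \<le> s \<Longrightarrow> v - s *\<^sub>R u \<in> C"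
  shows "- u \<in> rc C"
proof (rule in_rc_if_line_approx[OF tvs])
  show "- u \<in> affine hull C"
    using assms(1,2) by (simp add: affine_hull_eq_span span_base span_neg)
next
  fix e :: real
  assume "0 < e"
  then have "(e / 2) *\<^sub>R (v - (2 / e) *\<^sub>R u) \<in> C"
    using ray by (intro scaleR_mem) auto
  moreover have "(e / 2) *\<^sub>R (v - (2 / e) *\<^sub>R u) = - u + (e / 2) *\<^sub>R v"
    using \<open>0 < e\<close> by (simp add: algebra_simps)
  ultimately show "\<exists>s. \<bar>s\<bar> < e \<and> - u + s *\<^sub>R v \<in> C"
    using \<open>0 < e\<close> by (intro exI[of _ "e / 2"]) auto
qed

lemma ray_end_in_rc:
  assumes "0 \<in> C" "u \<in> C" "v \<in> C" "0 < s0" "0 < k"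
    and ray: "\<And>s. 0 \<le> s \<Longrightarrow> s < s0 \<Longrightarrow> v - s *\<^sub>R u \<in> C"
  shows "k *\<^sub>R (v - s0 *\<^sub>R u) \<in> rc C"
proof (rule in_rc_if_line_approx[OF tvs])
  show "k *\<^sub>R (v - s0 *\<^sub>R u) \<in> affine hull C"
    using assms(1-3) by (simp add: affine_hull_eq_span span_base span_diff span_scale)
next
  fix e :: real
  assume "0 < e"
  define s where "s = min (e / 2) s0"
  have s: "0 < s" "s \<le> s0" "\<bar>s\<bar> < e"
    using \<open>0 < e\<close> assms(4) by (auto simp: s_def)
  then have "k *\<^sub>R (v - (s0 - s) *\<^sub>R u) \<in> C"
    using assms(5) ray by (intro scaleR_mem) auto
  moreover have "k *\<^sub>R (v - (s0 - s) *\<^sub>R u) = k *\<^sub>R (v - s0 *\<^sub>R u) + s *\<^sub>R (k *\<^sub>R u)"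
    by (simp add: algebra_simps)
  ultimately show "\<exists>s. \<bar>s\<bar> < e \<and> k *\<^sub>R (v - s0 *\<^sub>R u) + s *\<^sub>R (k *\<^sub>R u) \<in> C"
    using s(3) by metis
qed

text \<open>A nonzero exit point would lie in the relative closure, hence by strict convexity in the
  relative interior, and the ray could be continued.\<close>

lemma ray_exit_eq_zero:
  assumes "0 \<in> C" "u \<in> C" "v \<in> C" "0 < s0"
    and below: "\<And>s. 0 \<le> s \<Longrightarrow> s < s0 \<Longrightarrow> v - s *\<^sub>R u \<in> C"
    and beyond: "\<And>s. s0 < s \<Longrightarrow> v - s *\<^sub>R u \<notin> C"
  shows "v - s0 *\<^sub>R u = 0"
proof (rule ccontr)
  define p where "p = v - s0 *\<^sub>R u"
  assume "v - s0 *\<^sub>R u \<noteq> 0"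
  then have "p \<in> open_segment ((1/2) *\<^sub>R p) (2 *\<^sub>R p)"
    by (intro in_open_segment_scaleR) (auto simp: p_def)
  moreover have "(1/2) *\<^sub>R p \<in> rc C" "2 *\<^sub>R p \<in> rc C"
    using assms(1-4) below unfolding p_def by (auto intro!: ray_end_in_rc)
  ultimately have "p \<in> ri C"
    using strictly_convex strictly_convex_setD by blast
  then obtain e where e: "0 < e" "\<forall>s. \<bar>s\<bar> < e \<longrightarrow> (1 - s) *\<^sub>R p + s *\<^sub>R v \<in> C"
    using ri_line_extends[OF tvs _ hull_inc[OF assms(3)]] by blast
  then have "(1 + e / 2) *\<^sub>R p - (e / 2) *\<^sub>R v \<in> C"
    using spec[OF e(2), of "- e / 2"] by simp
  moreover have "(1 + e / 2) *\<^sub>R p - (e / 2) *\<^sub>R v = v - ((1 + e / 2) * s0) *\<^sub>R u"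
    by (simp add: p_def algebra_simps)
  moreover have "s0 < (1 + e / 2) * s0"
    using assms(4) e(1) by simp
  ultimately show False
    using beyond by metis
qed

text \<open>Follow the ray \<open>v - s u\<close>. If it never leaves \<open>C\<close>, then \<open>-u\<close> lies in the relative
  closure, so \<open>0\<close> lies in the relative interior and \<open>C\<close> is not pointed; otherwise the ray
  leaves \<open>C\<close> at the apex \<open>0\<close>.\<close>

lemma pointed_diff_mem_imp_segment:
  assumes "0 \<in> C" and pointed: "\<And>x. x \<in> C \<Longrightarrow> - x \<in> C \<Longrightarrow> x = 0"
    and "u \<in> C" "v \<in> C" "v - u \<in> C"
  shows "\<exists>t. 0 \<le> t \<and> t \<le> 1 \<and> u = t *\<^sub>R v"
proof (cases "u = 0")
  case True
  then show ?thesis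
    by (intro exI[of _ 0]) auto
next
  case False
  define I where "I = {s. 0 \<le> s \<and> v - s *\<^sub>R u \<in> C}"
  have I_down: "s' \<in> I" if "s \<in> I" "0 \<le> s'" "s' \<le> s" for s s'
  proof (cases "s = 0")
    case False
    with that have "(1 - s' / s) *\<^sub>R v + (s' / s) *\<^sub>R (v - s *\<^sub>R u) \<in> C"
      using assms(4) by (intro convexD[OF convex]) (auto simp: I_def)
    with that False show ?thesis
      by (simp add: I_def algebra_simps)
  qed (use that in auto)
  have "0 \<in> I" "1 \<in> I"
    using assms(4,5) by (auto simp: I_def)
  show ?thesis
  proof (cases "bdd_above I")
    case False
    have "v - s *\<^sub>R u \<in> C" if "0 \<le> s" for s
    proof -
      from False obtain s' where "s' \<in> I" "s < s'"
        unfolding bdd_above_def by (meson not_le)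
      with that I_down show ?thesis
        by (auto simp: I_def)
    qed
    then have "- u \<in> rc C"
      by (rule uminus_in_rc_if_ray_unbounded[OF assms(1,3)])
    then have "0 \<in> ri C"
      using strictly_convex strictly_convex_setD subset_rc assms(3)
        zero_in_open_segment_uminus[OF \<open>u \<noteq> 0\<close>] by blast
    then have "- u \<in> C"
      using assms(3) by (rule uminus_mem_if_zero_in_ri)
    with pointed assms(3) \<open>u \<noteq> 0\<close> show ?thesis
      by blast
  next
    case True
    define s0 where "s0 = Sup I"
    have "1 \<le> s0"
      unfolding s0_def using \<open>1 \<in> I\<close> True by (rule cSup_upper)
    have below: "v - s *\<^sub>R u \<in> C" if s: "0 \<le> s" "s < s0" for s
    proof -
      obtain s' where "s' \<in> I" "s < s'"
        using less_cSup_iff[of I s] True \<open>0 \<in> I\<close> s(2) unfolding s0_def by blast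
      with s(1) I_down show ?thesis
        by (auto simp: I_def)
    qed
    have "v - s0 *\<^sub>R u = 0"
    proof (rule ray_exit_eq_zero[OF assms(1,3,4) _ below])
      show "v - s *\<^sub>R u \<notin> C" if "s0 < s" for s
        using that \<open>1 \<le> s0\<close> cSup_upper[OF _ True, of s] unfolding s0_def I_def by force
    qed (use \<open>1 \<le> s0\<close> in simp)
    with \<open>1 \<le> s0\<close> show ?thesis
      by (intro exI[of _ "1 / s0"]) (auto simp: algebra_simps)
  qed
qed

end

section \<open>Positively homogeneous functions on a strictly convex cone\<close>

locale homogeneous_on_strictly_convex_cone = strictly_convex_cone +
  fixes f :: "'a::{real_vector,topological_space} \<Rightarrow> real"
  assumes nonneg: "\<forall>x\<in>C. 0 \<le> f x"
    and homogeneous: "\<forall>x\<in>C. \<forall>c::real. c > 0 \<longrightarrow> f (c *\<^sub>R x) = c * f x"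
begin

lemma f_nonneg: "x \<in> C \<Longrightarrow> 0 \<le> f x"
  using nonneg by blast

lemma f_scaleR: "x \<in> C \<Longrightarrow> 0 < c \<Longrightarrow> f (c *\<^sub>R x) = c * f x"
  using homogeneous by blast

lemma f_zero: "0 \<in> C \<Longrightarrow> f 0 = 0"
  using f_scaleR[of 0 2] by simp

lemma scaleR_mem_sublevel: "x \<in> C \<Longrightarrow> 0 < c \<Longrightarrow> c * f x \<le> r \<Longrightarrow> c *\<^sub>R x \<in> sublevel C f r"
  by (simp add: sublevel_def scaleR_mem f_scaleR)

lemma strictly_quasi_convex_imp_zero:
  assumes "strictly_quasi_convex_on C f" "x \<in> C" "f x = 0"
  shows "x = 0"
proof (rule ccontr)
  assume "x \<noteq> 0"
  then have "x \<noteq> 2 *\<^sub>R x"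
    by (metis scaleR_cancel_right scaleR_one numeral_One num.distinct(1) numeral_eq_iff)
  then have "f ((1 - 1/2) *\<^sub>R x + (1/2) *\<^sub>R (2 *\<^sub>R x)) < max (f x) (f (2 *\<^sub>R x))"
    using assms(1,2) scaleR_mem by (intro strictly_quasi_convex_onD) auto
  moreover have "(1 - 1/2) *\<^sub>R x + (1/2) *\<^sub>R (2 *\<^sub>R x) = ((1 - 1/2) + 1/2 * 2) *\<^sub>R x"
    by (simp only: scaleR_left_distrib scaleR_scaleR)
  ultimately show False
    using assms(2,3) f_scaleR[of x 2] f_scaleR[of x "3/2"] by simp
qed

text \<open>Homogeneity turns strict quasi-convexity into convexity: normalise both points to the
  level set \<open>f = 1\<close>, where the quasi-convexity bound reads \<open>f \<le> 1\<close>.\<close>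

lemma strictly_quasi_convex_imp_convex_on:
  assumes sqc: "strictly_quasi_convex_on C f"
  shows "convex_on C f"
proof (rule convex_onI[OF _ convex])
  fix t :: real and x y
  assume t: "0 < t" "t < 1" and xy: "x \<in> C" "y \<in> C"
  consider "f x = 0" | "f y = 0" | "0 < f x" "0 < f y"
    using f_nonneg xy by force
  then show "f ((1 - t) *\<^sub>R x + t *\<^sub>R y) \<le> (1 - t) * f x + t * f y"
  proof cases
    case 1
    with sqc xy(1) have "x = 0"
      by (rule strictly_quasi_convex_imp_zero)
    with xy(2) t 1 show ?thesis
      by (simp add: f_scaleR)
  next
    case 2
    with sqc xy(2) have "y = 0"
      by (rule strictly_quasi_convex_imp_zero)
    with xy(1) t 2 show ?thesis
      by (simp add: f_scaleR)
  next
    case 3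
    define s where "s = (1 - t) * f x + t * f y"
    define t' where "t' = t * f y / s"
    have "0 < (1 - t) * f x" "0 < t * f y"
      using t 3 by simp_all
    then have "0 < s" "0 < t'" "t' < 1" "1 - t' = (1 - t) * f x / s"
      by (simp_all add: s_def t'_def field_simps)
    define x' where "x' = (1 / f x) *\<^sub>R x"
    define y' where "y' = (1 / f y) *\<^sub>R y"
    have "x' \<in> C" "y' \<in> C" "f x' = 1" "f y' = 1"
      using 3 xy by (simp_all add: x'_def y'_def scaleR_mem f_scaleR)
    have "f ((1 - t') *\<^sub>R x' + t' *\<^sub>R y') \<le> 1"
    proof (cases "x' = y'")
      case True
      with \<open>f x' = 1\<close> show ?thesis
        by (simp flip: scaleR_left_distrib)
    next
      case False
      with sqc \<open>x' \<in> C\<close> \<open>y' \<in> C\<close> \<open>0 < t'\<close> \<open>t' < 1\<close> \<open>f x' = 1\<close> \<open>f y' = 1\<close> show ?thesis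
        using strictly_quasi_convex_onD by fastforce
    qed
    moreover have "(1 - t) *\<^sub>R x + t *\<^sub>R y = s *\<^sub>R ((1 - t') *\<^sub>R x' + t' *\<^sub>R y')"
      using \<open>0 < s\<close> \<open>1 - t' = _\<close> 3 by (simp add: t'_def x'_def y'_def scaleR_add_right)
    moreover have "(1 - t') *\<^sub>R x' + t' *\<^sub>R y' \<in> C"
      using \<open>x' \<in> C\<close> \<open>y' \<in> C\<close> \<open>0 < t'\<close> \<open>t' < 1\<close> by (intro convexD[OF convex]) auto
    ultimately show ?thesis
      using \<open>0 < s\<close> by (simp add: f_scaleR s_def)
  qed
qed

lemma strictly_quasi_convex_imp_strictly_convex_powr:
  assumes sqc: "strictly_quasi_convex_on C f" and "1 < a"
  shows "strictly_convex_fun_on C (\<lambda>x. f x powr a)"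
  unfolding strictly_convex_fun_on_def
proof (intro conjI ballI allI impI convex)
  fix x y and t :: real
  assume xy: "x \<in> C" "y \<in> C" "x \<noteq> y" and t: "0 < t" "t < 1"
  define z where "z = (1 - t) *\<^sub>R x + t *\<^sub>R y"
  have "z \<in> C"
    using xy t unfolding z_def by (intro convexD[OF convex]) auto
  then have "0 \<le> f z"
    by (rule f_nonneg)
  show "f z powr a < (1 - t) * f x powr a + t * f y powr a"
  proof (cases "f x = f y")
    case True
    have "f z < max (f x) (f y)"
      unfolding z_def using sqc xy t by (rule strictly_quasi_convex_onD)
    with True \<open>0 \<le> f z\<close> \<open>1 < a\<close> have "f z powr a < f x powr a"
      by (intro powr_less_mono2) auto
    with True show ?thesis
      by (simp add: algebra_simps)
  next
    case False
    have "f z \<le> (1 - t) * f x + t * f y"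
      unfolding z_def using strictly_quasi_convex_imp_convex_on[OF sqc] xy t
      by (intro convex_onD) auto
    with \<open>0 \<le> f z\<close> \<open>1 < a\<close> have "f z powr a \<le> ((1 - t) * f x + t * f y) powr a"
      by (intro powr_mono2) auto
    also have "\<dots> < (1 - t) * f x powr a + t * f y powr a"
      using False f_nonneg xy t \<open>1 < a\<close> by (intro powr_strictly_convex) auto
    finally show ?thesis .
  qed
qed

lemma cone_subset_affine_hull_sublevel:
  assumes "0 < r"
  shows "C \<subseteq> affine hull (sublevel C f r)"
proof
  fix y
  assume "y \<in> C"
  show "y \<in> affine hull (sublevel C f r)"
  proof (cases "f y \<le> r")
    case True
    with \<open>y \<in> C\<close> show ?thesis
      by (auto simp: sublevel_def intro: hull_inc)
  next
    case False
    define c where "c = r / f y"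
    have "0 < c" "c * f y = r"
      using False assms by (auto simp: c_def)
    then have "c *\<^sub>R y \<in> sublevel C f r" "(c / 2) *\<^sub>R y \<in> sublevel C f r"
      using \<open>y \<in> C\<close> f_nonneg[of y] assms by (auto intro!: scaleR_mem_sublevel)
    then have "(2 / c - 1) *\<^sub>R (c *\<^sub>R y) + (1 - (2 / c - 1)) *\<^sub>R ((c / 2) *\<^sub>R y)
        \<in> affine hull (sublevel C f r)"
      by (intro mem_affine[OF affine_affine_hull]) (auto intro: hull_inc)
    moreover have "(2 / c - 1) * c + (1 - (2 / c - 1)) * (c / 2) = 1"
      using \<open>0 < c\<close> by (simp add: field_simps)
    ultimately show ?thesis
      by (simp flip: scaleR_left_distrib)
  qed
qed

lemma ri_sublevel_nbhd:
  assumes "0 < r" "w \<in> ri (sublevel C f r)"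
  shows "\<exists>U. open U \<and> w \<in> U \<and> (\<forall>u\<in>C. u \<in> U \<longrightarrow> f u \<le> r)"
proof -
  obtain U where "open U" "w \<in> U" "U \<inter> affine hull (sublevel C f r) \<subseteq> sublevel C f r"
    using assms(2) by (auto simp: in_ri_iff)
  with cone_subset_affine_hull_sublevel[OF assms(1)] show ?thesis
    by (auto simp: sublevel_def)
qed

text \<open>A relative interior point \<open>z\<close> of \<open>f \<le> r\<close> can be pushed out along its ray, which is
  impossible if \<open>f z = r\<close>.\<close>

lemma ri_sublevel_less:
  assumes "0 < r" "z \<in> ri (sublevel C f r)"
  shows "f z < r"
proof -
  have "z \<in> C" "f z \<le> r"
    using assms(2) ri_subset by (auto simp: sublevel_def)
  then have "(1/2) *\<^sub>R z \<in> sublevel C f r"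
    using f_nonneg assms(1) by (intro scaleR_mem_sublevel) auto
  then obtain e where e: "0 < e" "\<forall>s. \<bar>s\<bar> < e \<longrightarrow> (1 - s) *\<^sub>R z + s *\<^sub>R ((1/2) *\<^sub>R z) \<in> sublevel C f r"
    using ri_line_extends[OF tvs assms(2)] hull_inc by metis
  have "(1 - - e / 2) *\<^sub>R z + (- e / 2) *\<^sub>R ((1/2) *\<^sub>R z) = ((1 - - e / 2) + - e / 2 * (1/2)) *\<^sub>R z"
    by (simp only: scaleR_left_distrib scaleR_scaleR)
  also have "\<dots> = (1 + e / 4) *\<^sub>R z"
    by simp
  finally have "(1 + e / 4) *\<^sub>R z \<in> sublevel C f r"
    using spec[OF e(2), of "- e / 2"] e(1) by simp
  then have "(1 + e / 4) * f z \<le> r"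
    using \<open>z \<in> C\<close> e(1) by (simp add: sublevel_def f_scaleR)
  show ?thesis
  proof (rule ccontr)
    assume "\<not> f z < r"
    with \<open>f z \<le> r\<close> \<open>(1 + e / 4) * f z \<le> r\<close> have "e / 4 * r \<le> 0"
      by (simp add: algebra_simps)
    moreover have "0 < e / 4 * r"
      using e(1) \<open>0 < r\<close> by simp
    ultimately show False
      by linarith
  qed
qed

lemma strictly_sub_convex_imp_strictly_quasi_convex:
  assumes ssc: "strictly_sub_convex_on C f" and zero: "{x\<in>C. f x = 0} \<subseteq> {0}"
  shows "strictly_quasi_convex_on C f"
  unfolding strictly_quasi_convex_on_def
proof (intro conjI ballI allI impI convex)
  fix x y and t :: real
  assume xy: "x \<in> C" "y \<in> C" "x \<noteq> y" and t: "0 < t" "t < 1"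
  define r where "r = max (f x) (f y)"
  have "0 < r"
  proof (rule ccontr)
    assume "\<not> 0 < r"
    then have "f x = 0" "f y = 0"
      using xy f_nonneg[of x] f_nonneg[of y] by (auto simp: r_def)
    with xy zero show False
      by auto
  qed
  have "x \<in> rc (sublevel C f r)" "y \<in> rc (sublevel C f r)"
    using xy subset_rc by (fastforce simp: r_def sublevel_def)+
  moreover have "(1 - t) *\<^sub>R x + t *\<^sub>R y \<in> open_segment x y"
    using xy t by (auto simp: in_segment)
  ultimately have "(1 - t) *\<^sub>R x + t *\<^sub>R y \<in> ri (sublevel C f r)"
    using ssc strictly_convex_setD unfolding strictly_sub_convex_on_def by blast
  with \<open>0 < r\<close> show "f ((1 - t) *\<^sub>R x + t *\<^sub>R y) < max (f x) (f y)"
    unfolding r_def by (rule ri_sublevel_less)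
qed

lemma continuous_strictly_quasi_convex_imp_strictly_sub_convex:
  assumes cont: "continuous_on C f" and sqc: "strictly_quasi_convex_on C f"
  shows "strictly_sub_convex_on C f"
  unfolding strictly_sub_convex_on_def strictly_convex_set_def
proof (intro allI ballI impI subsetI)
  fix r x y w
  assume x: "x \<in> rc (sublevel C f r)" and y: "y \<in> rc (sublevel C f r)"
    and "x \<noteq> y" and w: "w \<in> open_segment x y"
  show "w \<in> ri (sublevel C f r)"
  proof (cases "0 < r")
    case False
    have "sublevel C f r \<subseteq> {0}"
      using False f_nonneg strictly_quasi_convex_imp_zero[OF sqc]
      by (force simp: sublevel_def)
    then have "affine hull (sublevel C f r) \<subseteq> {0}"
      by (metis affine_hull_eq affine_sing hull_mono)
    with x y \<open>x \<noteq> y\<close> show ?thesis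
      by (auto simp: in_rc_iff)
  next
    case True
    have "x \<in> rc C" "y \<in> rc C"
      using x y rc_mono[of "sublevel C f r" C] by (auto simp: sublevel_def)
    then have seg_ri: "open_segment x y \<subseteq> ri C"
      using strictly_convex strictly_convex_setD by blast
    have conv: "convex (sublevel C f r)"
      using sqc by (rule strictly_quasi_convex_imp_convex_sublevel)
    obtain w1 w2 where w12: "w1 \<in> open_segment x y" "w2 \<in> open_segment x y" "w1 \<noteq> w2"
      "w = midpoint w1 w2"
      using open_segment_point_is_midpoint[OF w] by blast
    then have "w1 \<in> C" "w2 \<in> C"
      using seg_ri ri_subset by blast+
    then have "f w < max (f w1) (f w2)"
      using strictly_quasi_convex_onD[OF sqc _ _ \<open>w1 \<noteq> w2\<close>, of "1/2"] w12(4)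
      by (simp add: midpoint_def scaleR_add_right)
    moreover have "f w1 \<le> r" "f w2 \<le> r"
      using sublevel_le_on_rc[OF tvs cont conv x y] w12 \<open>w1 \<in> C\<close> \<open>w2 \<in> C\<close> by auto
    ultimately have "f w < r"
      by linarith
    with cont seg_ri w show ?thesis
      using ri_sublevel_if_less by blast
  qed
qed

text \<open>Otherwise strict convexity would put the midpoint of \<open>w\<close> and \<open>(r / f w) w\<close>, where
  \<open>f > r\<close>, into the sublevel set.\<close>

lemma not_in_rc_sublevel:
  assumes ssc: "strictly_sub_convex_on C f" and "w \<in> C" "0 < r" "r < f w"
  shows "w \<notin> rc (sublevel C f r)"
proof
  assume w: "w \<in> rc (sublevel C f r)"
  define c where "c = r / f w"
  have c: "0 < c" "c < 1" "c * f w = r"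
    using assms(3,4) by (auto simp: c_def)
  have "w \<noteq> 0"
    using assms(2-4) f_zero by auto
  then have "w \<noteq> c *\<^sub>R w"
    using c by (metis scaleR_cancel_right scaleR_one less_irrefl)
  moreover have "c *\<^sub>R w \<in> rc (sublevel C f r)"
    using assms(2) c subset_rc by (fastforce intro: scaleR_mem_sublevel)
  ultimately have "midpoint w (c *\<^sub>R w) \<in> ri (sublevel C f r)"
    using ssc w strictly_convex_setD unfolding strictly_sub_convex_on_def
    by (metis midpoint_in_open_segment)
  moreover have "midpoint w (c *\<^sub>R w) = ((1 + c) / 2) *\<^sub>R w"
    by (simp add: midpoint_def scaleR_add_left scaleR_add_right add_divide_distrib)
  ultimately have "(1 + c) / 2 * f w \<le> r"
    using assms(2) c ri_subset by (fastforce simp: sublevel_def f_scaleR)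
  with c assms(4) show False
    by (simp add: field_simps)
qed

lemma in_ri_sublevel:
  assumes ssc: "strictly_sub_convex_on C f" and "w \<in> C" "w \<noteq> 0" "f w < r"
  shows "w \<in> ri (sublevel C f r)"
proof -
  define c where "c = 2 * r / (r + f w)"
  have "0 < r + f w"
    using assms(2,4) f_nonneg[of w] by linarith
  then have "1 < c" "c * f w \<le> r"
    using assms(4) f_nonneg[OF assms(2)] by (auto simp: c_def field_simps)
  then have "(1/2) *\<^sub>R w \<in> rc (sublevel C f r)" "c *\<^sub>R w \<in> rc (sublevel C f r)"
    using assms(2,4) f_nonneg[OF assms(2)] subset_rc
    by (fastforce intro: scaleR_mem_sublevel)+
  moreover have "w \<in> open_segment ((1/2) *\<^sub>R w) (c *\<^sub>R w)"
    using assms(3) \<open>1 < c\<close> by (intro in_open_segment_scaleR) auto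
  ultimately show ?thesis
    using ssc strictly_convex_setD unfolding strictly_sub_convex_on_def by blast
qed

lemma zero_in_ri_sublevel:
  assumes ssc: "strictly_sub_convex_on C f" and "x \<in> C" "- x \<in> C" "x \<noteq> 0" "0 < r"
  shows "0 \<in> ri (sublevel C f r)"
proof -
  define c where "c = r / (f x + f (- x) + r)"
  have "0 < f x + f (- x) + r"
    using assms f_nonneg[of x] f_nonneg[of "- x"] by linarith
  then have "0 < c" "c * f x \<le> r" "c * f (- x) \<le> r"
    using assms f_nonneg[of x] f_nonneg[of "- x"] by (auto simp: c_def field_simps)
  then have "c *\<^sub>R x \<in> rc (sublevel C f r)" "- (c *\<^sub>R x) \<in> rc (sublevel C f r)"
    using assms(2,3) subset_rc scaleR_mem_sublevel[of "- x" c r]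
    by (fastforce intro: scaleR_mem_sublevel)+
  moreover have "0 \<in> open_segment (c *\<^sub>R x) (- (c *\<^sub>R x))"
    using assms(4) \<open>0 < c\<close> by (intro zero_in_open_segment_uminus) simp
  ultimately show ?thesis
    using ssc strictly_convex_setD unfolding strictly_sub_convex_on_def by blast
qed

lemma pointed_zero_nbhd:
  assumes "0 \<in> C" and pointed: "\<And>x. x \<in> C \<Longrightarrow> - x \<in> C \<Longrightarrow> x = 0" and "0 < r"
  shows "\<exists>U. open U \<and> 0 \<in> U \<and> (\<forall>u\<in>C. u \<in> U \<longrightarrow> f u \<le> r)"
proof (cases "C = {0}")
  case True
  with assms show ?thesis
    by (intro exI[of _ UNIV]) (auto simp: f_zero)
next
  case False
  then obtain x where x: "x \<in> C" "x \<noteq> 0"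
    using assms(1) by blast
  define v where "v = (r / (f x + r)) *\<^sub>R x"
  have "0 < f x + r"
    using x f_nonneg[of x] assms(3) by linarith
  then have "v \<in> C" "v \<noteq> 0" "f v \<le> r"
    using x f_nonneg[of x] assms(3)
    by (auto simp: v_def scaleR_mem f_scaleR field_simps)
  then obtain V where V: "open V" "v \<in> V" "V \<inter> affine hull C \<subseteq> C"
    using nonzero_mem_ri by (auto simp: in_ri_iff)
  then obtain U where U: "open U" "0 \<in> U" "\<forall>u\<in>U. (- 1) *\<^sub>R u + v \<in> V"
    using tvs_affine_nbhd[OF tvs V(1), of "- 1" 0 v] by auto
  have "f u \<le> r" if u: "u \<in> C" "u \<in> U" for u
  proof -
    have "v - u \<in> affine hull C"
      using assms(1) \<open>v \<in> C\<close> u(1) by (simp add: affine_hull_eq_span span_diff span_base)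
    with U u V(3) have "v - u \<in> C"
      by auto
    then obtain t where t: "0 \<le> t" "t \<le> 1" "u = t *\<^sub>R v"
      using pointed_diff_mem_imp_segment[OF assms(1) pointed u(1) \<open>v \<in> C\<close>] by blast
    then have "f u \<le> f v"
      using \<open>v \<in> C\<close> assms(1) f_nonneg[of v]
      by (cases "t = 0") (auto simp: f_zero f_scaleR mult_left_le_one_le)
    with \<open>f v \<le> r\<close> show ?thesis
      by linarith
  qed
  with U show ?thesis
    by blast
qed

lemma lower_bound_nbhd:
  assumes ssc: "strictly_sub_convex_on C f" and "w \<in> C" "0 < e"
  shows "\<exists>U. open U \<and> w \<in> U \<and> (\<forall>u\<in>C. u \<in> U \<longrightarrow> f w - e < f u)"
proof (cases "f w = 0")
  case True
  with assms f_nonneg show ?thesis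
    by (intro exI[of _ UNIV]) force
next
  case False
  define r where "r = max (f w - e) (f w / 2)"
  have r: "0 < r" "r < f w" "f w - e \<le> r"
    using False f_nonneg[OF assms(2)] assms(3) by (auto simp: r_def)
  have "w \<notin> rc (sublevel C f r)"
    using not_in_rc_sublevel[OF ssc assms(2) r(1,2)] .
  moreover have "w \<in> affine hull (sublevel C f r)"
    using cone_subset_affine_hull_sublevel[OF r(1)] assms(2) by blast
  ultimately obtain U where "open U" "w \<in> U" "\<forall>y\<in>sublevel C f r. y \<notin> U"
    unfolding in_rc_iff by blast
  with r(3) show ?thesis
    by (intro exI[of _ U]) (force simp: sublevel_def)
qed

lemma upper_bound_nbhd:
  assumes ssc: "strictly_sub_convex_on C f" and "w \<in> C" "f w < r"
  shows "\<exists>U. open U \<and> w \<in> U \<and> (\<forall>u\<in>C. u \<in> U \<longrightarrow> f u \<le> r)"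
proof -
  have "0 < r"
    using assms(2,3) f_nonneg by force
  consider "w \<noteq> 0" | "w = 0" "\<exists>x\<in>C. x \<noteq> 0 \<and> - x \<in> C" | "w = 0" "\<And>x. x \<in> C \<Longrightarrow> - x \<in> C \<Longrightarrow> x = 0"
    by blast
  then show ?thesis
  proof cases
    case 1
    with ssc assms(2,3) have "w \<in> ri (sublevel C f r)"
      by (intro in_ri_sublevel)
    with \<open>0 < r\<close> show ?thesis
      by (rule ri_sublevel_nbhd)
  next
    case 2
    then have "0 \<in> ri (sublevel C f r)"
      using zero_in_ri_sublevel[OF ssc _ _ _ \<open>0 < r\<close>] by blast
    with \<open>0 < r\<close> 2 show ?thesis
      using ri_sublevel_nbhd by blast
  next
    case 3
    with assms(2) \<open>0 < r\<close> show ?thesis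
      using pointed_zero_nbhd by blast
  qed
qed

lemma strictly_sub_convex_imp_continuous:
  assumes ssc: "strictly_sub_convex_on C f"
  shows "continuous_on C f"
  unfolding continuous_on_topological
proof (intro ballI allI impI)
  fix w B
  assume "w \<in> C" "open B" "f w \<in> B"
  then obtain e where "0 < e" and e: "\<forall>y. dist y (f w) < e \<longrightarrow> y \<in> B"
    unfolding open_dist by blast
  obtain U1 where U1: "open U1" "w \<in> U1" "\<forall>u\<in>C. u \<in> U1 \<longrightarrow> f w - e < f u"
    using lower_bound_nbhd[OF ssc \<open>w \<in> C\<close> \<open>0 < e\<close>] by blast
  obtain U2 where U2: "open U2" "w \<in> U2" "\<forall>u\<in>C. u \<in> U2 \<longrightarrow> f u \<le> f w + e / 2"
    using upper_bound_nbhd[OF ssc \<open>w \<in> C\<close>, of "f w + e / 2"] \<open>0 < e\<close> by auto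
  have "f u \<in> B" if "u \<in> C" "u \<in> U1 \<inter> U2" for u
    using that U1(3) U2(3) \<open>0 < e\<close> e by (force simp: dist_real_def)
  with U1 U2 show "\<exists>A. open A \<and> w \<in> A \<and> (\<forall>u\<in>C. u \<in> A \<longrightarrow> f u \<in> B)"
    by (intro exI[of _ "U1 \<inter> U2"]) auto
qed

end

theorem mainTheorem4:
  fixes C :: "'a::{real_vector,topological_space} set"
    and f :: "'a \<Rightarrow> real"
    and \<alpha> :: real
  assumes tvs: "tvs_ops_continuous TYPE('a)"
    and nonempty: "C \<noteq> {}"
    and cone: "is_cone C"
    and sconv: "strictly_convex_set C"
    and nonneg: "\<forall>x\<in>C. 0 \<le> f x"
    and homog: "\<forall>x\<in>C. \<forall>c::real. c > 0 \<longrightarrow> f (c *\<^sub>R x) = c * f x"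
    and alpha: "\<alpha> > 1"
  shows "((continuous_on C f \<and> strictly_convex_fun_on C (\<lambda>x. f x powr \<alpha>))
            \<longleftrightarrow> (continuous_on C f \<and> strictly_quasi_convex_on C f))
       \<and> ((continuous_on C f \<and> strictly_quasi_convex_on C f)
            \<longleftrightarrow> (strictly_sub_convex_on C f \<and> {x\<in>C. f x = 0} \<subseteq> {0}))"
proof -
  interpret homogeneous_on_strictly_convex_cone C f
    using tvs cone sconv nonneg homog by unfold_locales
  have "strictly_convex_fun_on C (\<lambda>x. f x powr \<alpha>) \<longleftrightarrow> strictly_quasi_convex_on C f"
    using strictly_convex_powr_imp_strictly_quasi_convex[OF _ _ nonneg]
      strictly_quasi_convex_imp_strictly_convex_powr alpha by force
  moreover have "continuous_on C f \<and> strictly_quasi_convex_on C f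
      \<longleftrightarrow> strictly_sub_convex_on C f \<and> {x\<in>C. f x = 0} \<subseteq> {0}"
    using continuous_strictly_quasi_convex_imp_strictly_sub_convex
      strictly_quasi_convex_imp_zero
      strictly_sub_convex_imp_continuous strictly_sub_convex_imp_strictly_quasi_convex
    by blast
  ultimately show ?thesis
    by blast
qed

end
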